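(* Let $p>3$ be a prime, let $a$ be a positive integer with $\gcd(a,p)=1$, and let $r\ge0$, $m\ge1$ be integers. Let $b_{2,r,a,m}(n)$ be the number of partitions of $n$ in which every multiplicity has the form $j(pr+a)+pk$ with $j\in\{0,1\}$ and $0\le k\le m-1$. Let $t$ be an integer such that $24ta^{-1}+1$ is a quadratic nonresidue modulo $p$, where $a^{-1}$ is the inverse of $a$ modulo $p$. Then $b_{2,r,a,m}(pn+t)\equiv 0\pmod 2$ for all $n\ge0$.
   Context: Multiplicity of a part means the number of times it appears in the partition. Equivalently, $\sum_{n\ge0}b_{2,r,a,m}(n)q^n=\prod_{n\ge1}\frac{(1-q^{2(pr+a)n})(1-q^{pmn})}{(1-q^{(pr+a)n})(1-q^{pn})}$. *)

theory Defs
  imports "HOL-Number_Theory.Number_Theory"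
begin

definition allowed_mult :: "nat \<Rightarrow> nat \<Rightarrow> nat \<Rightarrow> nat \<Rightarrow> nat set" where
  "allowed_mult p r a m = {j * (p * r + a) + p * k | j k. j \<in> {0, 1} \<and> k < m}"

text \<open>A partition of n is encoded by its multiplicity function f (f i = number of times
  the part i occurs), with no part 0, no part larger than n, and total size n.\<close>
definition partitions_mult :: "nat \<Rightarrow> (nat \<Rightarrow> nat) set" where
  "partitions_mult n = {f. f 0 = 0 \<and> (\<forall>i>n. f i = 0) \<and> (\<Sum>i\<in>{1..n}. i * f i) = n}"

definition b2 :: "nat \<Rightarrow> nat \<Rightarrow> nat \<Rightarrow> nat \<Rightarrow> nat \<Rightarrow> nat" where
  "b2 p r a m n = card {f \<in> partitions_mult n. \<forall>i \<in> {1..n}. f i > 0 \<longrightarrow> f i \<in> allowed_mult p r a m}"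

end

theory Submission
  imports Defs "HOL-Library.Disjoint_Sets" "HOL-Library.Z2"
begin

text \<open>Write every multiplicity as \<open>j(pr+a) + pk\<close> with \<open>j \<in> {0,1}\<close>. The parts with
  \<open>j = 1\<close> form a partition \<open>\<lambda>\<close> into distinct parts, and \<open>n \<equiv> (pr+a)|\<lambda>| (mod p)\<close>. Applying
  Franklin's involution to \<open>\<lambda>\<close> while keeping the \<open>pk\<close> summands is an involution on the
  partitions counted by \<^const>\<open>b2\<close>, and its fixed points are those for which
  \<open>\<lambda>\<close> is a pentagonal shape, so that \<open>24|\<lambda>| + 1\<close> is a square. Hence if the count is odd there
  is such a \<open>\<lambda>\<close>; for \<open>n = pn' + t\<close> this gives \<open>t \<equiv> a|\<lambda>|\<close> and makes
  \<open>24ta\<^sup>-\<^sup>1 + 1 \<equiv> 24|\<lambda>| + 1\<close> a quadratic residue modulo \<open>p\<close>.\<close>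

lemma even_card_fixpoint_free_involution:
  assumes "\<And>x. x \<in> X \<Longrightarrow> h x \<in> X" "\<And>x. x \<in> X \<Longrightarrow> h (h x) = x"
    and "\<And>x. x \<in> X \<Longrightarrow> h x \<noteq> x"
  shows "even (card X)"
proof -
  \<comment> \<open>Count in \<open>\<int>/2\<close>, where each orbit \<open>{x, h x}\<close> contributes \<open>1 + 1 = 0\<close>.\<close>
  have "(\<Sum>x\<in>X. 1 :: bit) = 0"
    by (rule sum_involution_eq_0[where h = h]) (use assms in simp_all)
  then have "even (of_nat (card X) :: bit)" by simp
  then show ?thesis by (simp only: even_of_nat_iff)
qed

section \<open>Franklin's involution\<close>

text \<open>A partition into distinct parts is represented by its set \<open>D\<close> of parts. Its slope is the
  run \<open>{top_run_start D..Max D}\<close> of consecutive parts ending at the largest one. If the smallest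
  part \<open>s\<close> is at most the length of the slope, \<open>move_smallest\<close> deletes it and adds \<open>1\<close>
  to the \<open>s\<close> largest parts, which on the set replaces \<open>Max D + 1 - s\<close> by \<open>Max D + 1\<close>;
  otherwise \<open>move_slope\<close> subtracts \<open>1\<close> from each part of the slope and adds its length as
  a new smallest part. Franklin's involution performs the applicable move, except on the pentagonal
  shapes \<open>{k..<2k}\<close> and \<open>{k+1..<2k+1}\<close>, which it fixes.\<close>

definition top_run_start :: "nat set \<Rightarrow> nat" where
  "top_run_start D = (LEAST b. {b..Max D} \<subseteq> D)"

lemma top_run_start_le:
  assumes "{b..Max D} \<subseteq> D"
  shows "top_run_start D \<le> b"
  unfolding top_run_start_def using assms by (rule Least_le)

lemma top_run_start_run:
  assumes "finite D" "D \<noteq> {}"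
  shows "{top_run_start D..Max D} \<subseteq> D"
proof -
  have "{Max D..Max D} \<subseteq> D" using assms by simp
  then show ?thesis unfolding top_run_start_def by (rule LeastI)
qed

lemma top_run_start_le_Max:
  assumes "finite D" "D \<noteq> {}"
  shows "top_run_start D \<le> Max D"
  using assms by (intro top_run_start_le) simp

lemma top_run_start_in:
  assumes "finite D" "D \<noteq> {}"
  shows "top_run_start D \<in> D"
  using top_run_start_run[OF assms] top_run_start_le_Max[OF assms] by auto

lemma Min_le_top_run_start:
  assumes "finite D" "D \<noteq> {}"
  shows "Min D \<le> top_run_start D"
  using assms top_run_start_in[OF assms] by simp

lemma top_run_start_pos:
  assumes "finite D" "D \<noteq> {}" "0 \<notin> D"
  shows "0 < top_run_start D"
  using top_run_start_in[OF assms(1,2)] assms(3) by (cases "top_run_start D") auto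

lemma pred_top_run_start_notin:
  assumes "finite D" "D \<noteq> {}" "0 \<notin> D"
  shows "top_run_start D - 1 \<notin> D"
proof
  assume "top_run_start D - 1 \<in> D"
  moreover have "{top_run_start D - 1..Max D} \<subseteq> insert (top_run_start D - 1) {top_run_start D..Max D}"
    by auto
  ultimately have "{top_run_start D - 1..Max D} \<subseteq> D"
    using top_run_start_run[OF assms(1,2)] by blast
  then have "top_run_start D \<le> top_run_start D - 1" by (rule top_run_start_le)
  then show False using top_run_start_pos[OF assms] by simp
qed

lemma top_run_start_eqI:
  assumes "{b..Max D} \<subseteq> D" "b - 1 \<notin> D" "b \<le> Max D"
  shows "top_run_start D = b"
proof (rule antisym)
  show "top_run_start D \<le> b" using assms(1) by (rule top_run_start_le)
  show "b \<le> top_run_start D"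
  proof (rule ccontr)
    assume "\<not> b \<le> top_run_start D"
    then have "b - 1 \<in> {top_run_start D..Max D}" using assms(3) by auto
    moreover have "{top_run_start D..Max D} \<subseteq> D"
      using assms(1) unfolding top_run_start_def by (rule LeastI)
    ultimately show False using assms(2) by blast
  qed
qed

definition move_smallest :: "nat set \<Rightarrow> nat set" where
  "move_smallest D = insert (Max D + 1) (D - {Min D, Max D + 1 - Min D})"

definition move_slope :: "nat set \<Rightarrow> nat set" where
  "move_slope D = insert (Max D + 1 - top_run_start D) (insert (top_run_start D - 1) (D - {Max D}))"

definition franklin :: "nat set \<Rightarrow> nat set" where
  "franklin D =
    (if D = {} then D
     else if top_run_start D + Min D \<le> Max D + 1
     then (if Max D + 1 = 2 * Min D then D else move_smallest D)
     else (if Max D + 2 = 2 * top_run_start D then D else move_slope D))"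

lemma franklin_cases:
  obtains (empty) "D = {}" "franklin D = D"
  | (pentagonal_smallest) "D \<noteq> {}" "top_run_start D + Min D \<le> Max D + 1"
      "Max D + 1 = 2 * Min D" "franklin D = D"
  | (smallest) "D \<noteq> {}" "top_run_start D + Min D \<le> Max D + 1"
      "Max D + 1 \<noteq> 2 * Min D" "franklin D = move_smallest D"
  | (pentagonal_slope) "D \<noteq> {}" "Max D + 1 < top_run_start D + Min D"
      "Max D + 2 = 2 * top_run_start D" "franklin D = D"
  | (slope) "D \<noteq> {}" "Max D + 1 < top_run_start D + Min D"
      "Max D + 2 \<noteq> 2 * top_run_start D" "franklin D = move_slope D"
  unfolding franklin_def by (metis not_le)

lemma
  assumes fin: "finite D" and pos: "0 \<notin> D" and ne: "D \<noteq> {}"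
    and short: "top_run_start D + Min D \<le> Max D + 1" and np: "Max D + 1 \<noteq> 2 * Min D"
  shows Max_move_smallest: "Max (move_smallest D) = Max D + 1"
    and Min_less_move_smallest: "y \<in> move_smallest D \<Longrightarrow> Min D < y"
    and top_run_start_move_smallest: "top_run_start (move_smallest D) = Max D + 2 - Min D"
    and sum_move_smallest: "\<Sum>(move_smallest D) = \<Sum>D"
proof -
  define s M x where "s = Min D" and "M = Max D" and "x = Max D + 1 - Min D"
  have sD: "s \<in> D" unfolding s_def using fin ne by simp
  have bounds: "s \<le> y \<and> y \<le> M" if "y \<in> D" for y using fin that unfolding s_def M_def by simp
  have "0 < s" using sD pos by (cases s) auto
  then have x_run: "top_run_start D \<le> x" "x \<le> M" using short unfolding x_def s_def M_def by auto
  then have xD: "x \<in> D" using top_run_start_run[OF fin ne] unfolding M_def by auto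
  have "s < x" using x_run Min_le_top_run_start[OF fin ne] np unfolding x_def s_def M_def by auto
  have M1: "M + 1 \<notin> D" using bounds by fastforce
  have sx: "s + x = M + 1" using bounds[OF sD] unfolding x_def s_def M_def by simp
  have E: "move_smallest D = insert (M + 1) (D - {s, x})"
    unfolding move_smallest_def s_def M_def x_def ..
  show "Max (move_smallest D) = Max D + 1"
    unfolding E M_def[symmetric] using fin by (intro Max_eqI) (auto dest: bounds)
  show "y \<in> move_smallest D \<Longrightarrow> Min D < y"
    using bounds \<open>s < x\<close> \<open>x \<le> M\<close> unfolding E s_def[symmetric] by fastforce
  show "top_run_start (move_smallest D) = Max D + 2 - Min D"
  proof -
    have "top_run_start (move_smallest D) = x + 1"
    proof (rule top_run_start_eqI)
      show "{x + 1..Max (move_smallest D)} \<subseteq> move_smallest D"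
        using \<open>Max (move_smallest D) = Max D + 1\<close> top_run_start_run[OF fin ne] x_run \<open>s < x\<close>
        unfolding E M_def by auto
    qed (use \<open>Max (move_smallest D) = Max D + 1\<close> x_run in \<open>auto simp: E M_def\<close>)
    then show ?thesis using sx unfolding s_def M_def by simp
  qed
  have "\<Sum>(move_smallest D) = (M + 1) + \<Sum>(D - {s, x})" unfolding E using fin M1 by simp
  moreover have "\<Sum>D = \<Sum>(D - {s, x}) + (s + x)"
    using fin sD xD \<open>s < x\<close> by (subst sum.subset_diff[of "{s, x}"]) auto
  ultimately show "\<Sum>(move_smallest D) = \<Sum>D" using sx by simp
qed

lemma franklin_move_smallest:
  assumes "finite D" "0 \<notin> D" "D \<noteq> {}"
    and "top_run_start D + Min D \<le> Max D + 1" "Max D + 1 \<noteq> 2 * Min D"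
  shows "franklin (move_smallest D) = D"
proof -
  let ?E = "move_smallest D"
  note Max_E = Max_move_smallest[OF assms] and top_E = top_run_start_move_smallest[OF assms]
  have E: "finite ?E" "?E \<noteq> {}" using assms(1) unfolding move_smallest_def by auto
  have "Min D < Min ?E" using Min_less_move_smallest[OF assms] E by simp
  have s_le: "Min D \<le> Max D" using assms(1,3) by simp
  have "Max ?E + 1 < top_run_start ?E + Min ?E"
    using \<open>Min D < Min ?E\<close> s_le Max_E top_E by simp
  moreover have "Max ?E + 2 \<noteq> 2 * top_run_start ?E" using assms(5) s_le Max_E top_E by simp
  ultimately have "franklin ?E = move_slope ?E"
    using E by (cases ?E rule: franklin_cases) auto
  also have "\<dots> = D"
  proof -
    define s M where "s = Min D" and "M = Max D"
    define x where "x = M + 1 - s"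
    have "M + 1 \<notin> D"
      using assms(1) Max_ge unfolding M_def by (metis add_le_same_cancel1 not_one_le_zero)
    have "s \<in> D" unfolding s_def using assms(1,3) by simp
    then have "0 < s" using assms(2) by (metis gr0I)
    then have "x \<in> {top_run_start D..M}" using assms(4) unfolding x_def s_def M_def by auto
    then have "x \<in> D" using top_run_start_run[OF assms(1,3)] unfolding M_def by blast
    have "move_slope ?E = insert s (insert x (?E - {M + 1}))"
      unfolding move_slope_def Max_E top_E s_def M_def x_def using s_le by simp
    also have "\<dots> = D"
      unfolding move_smallest_def s_def[symmetric] M_def[symmetric] x_def[symmetric] using \<open>M + 1 \<notin> D\<close> \<open>s \<in> D\<close> \<open>x \<in> D\<close> by blast
    finally show ?thesis .
  qed
  finally show ?thesis .
qed

lemma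
  assumes fin: "finite D" and pos: "0 \<notin> D" and ne: "D \<noteq> {}"
    and long: "Max D + 1 < top_run_start D + Min D" and np: "Max D + 2 \<noteq> 2 * top_run_start D"
  shows Max_move_slope: "Max (move_slope D) = Max D - 1"
    and Min_move_slope: "Min (move_slope D) = Max D + 1 - top_run_start D"
    and top_run_start_move_slope_le: "top_run_start (move_slope D) \<le> top_run_start D - 1"
    and sum_move_slope: "\<Sum>(move_slope D) = \<Sum>D"
proof -
  define b M \<sigma> where "b = top_run_start D" and "M = Max D" and "\<sigma> = Max D + 1 - top_run_start D"
  have MD: "M \<in> D" unfolding M_def using fin ne by simp
  have bounds: "Min D \<le> y \<and> y \<le> M" if "y \<in> D" for y using fin that unfolding M_def by simp
  have run: "{b..M} \<subseteq> D" "b \<le> M" "Min D \<le> b" "b - 1 \<notin> D"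
    unfolding b_def M_def using top_run_start_run[OF fin ne] top_run_start_le_Max[OF fin ne]
      Min_le_top_run_start[OF fin ne] pred_top_run_start_notin[OF fin ne pos] by simp_all
  have \<sigma>: "0 < \<sigma>" "\<sigma> < Min D" "\<sigma> < b - 1" "(b - 1) + \<sigma> = M"
    using run long np unfolding \<sigma>_def b_def M_def by auto
  have "\<sigma> \<notin> D" using \<sigma>(2) bounds by fastforce
  have E: "move_slope D = insert \<sigma> (insert (b - 1) (D - {M}))"
    unfolding move_slope_def \<sigma>_def b_def M_def ..
  show "Max (move_slope D) = Max D - 1"
    unfolding E M_def[symmetric]
  proof (rule Max_eqI)
    show "M - 1 \<in> insert \<sigma> (insert (b - 1) (D - {M}))"
      using run \<sigma> by (cases "b \<le> M - 1") auto
  qed (use fin \<sigma> run in \<open>auto dest: bounds\<close>)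
  show "Min (move_slope D) = Max D + 1 - top_run_start D"
    unfolding E \<sigma>_def[symmetric] using fin \<sigma> by (intro Min_eqI) (auto dest: bounds)
  show "top_run_start (move_slope D) \<le> top_run_start D - 1"
  proof (rule top_run_start_le)
    have "{b - 1..M - 1} \<subseteq> insert (b - 1) ({b..M} - {M})" by auto
    then show "{top_run_start D - 1..Max (move_slope D)} \<subseteq> move_slope D"
      unfolding \<open>Max (move_slope D) = Max D - 1\<close> b_def[symmetric] M_def[symmetric]
      unfolding E using run(1) by blast
  qed
  have "\<Sum>(move_slope D) = \<sigma> + (b - 1) + \<Sum>(D - {M})"
    unfolding E using fin \<open>\<sigma> \<notin> D\<close> run(4) \<sigma>(3) by simp
  moreover have "\<Sum>D = \<Sum>(D - {M}) + M" using fin MD by (simp add: sum.remove)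
  ultimately show "\<Sum>(move_slope D) = \<Sum>D" using \<sigma>(4) by simp
qed

lemma franklin_move_slope:
  assumes "finite D" "0 \<notin> D" "D \<noteq> {}"
    and "Max D + 1 < top_run_start D + Min D" "Max D + 2 \<noteq> 2 * top_run_start D"
  shows "franklin (move_slope D) = D"
proof -
  let ?E = "move_slope D"
  define b M where "b = top_run_start D" and "M = Max D"
  define \<sigma> where "\<sigma> = M + 1 - b"
  have Max_E: "Max ?E = M - 1" and Min_E: "Min ?E = \<sigma>" and top_E: "top_run_start ?E \<le> b - 1"
    using Max_move_slope[OF assms] Min_move_slope[OF assms] top_run_start_move_slope_le[OF assms]
    unfolding \<sigma>_def b_def M_def by simp_all
  have run: "b \<le> M" "0 < b" "b - 1 \<notin> D"
    unfolding b_def M_def using top_run_start_le_Max[OF assms(1,3)]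
      top_run_start_pos[OF assms(1,3,2)] pred_top_run_start_notin[OF assms(1,3,2)] by simp_all
  have long: "M + 1 < b + Min D" and np: "M + 2 \<noteq> 2 * b" using assms(4,5) unfolding b_def M_def .
  have "?E \<noteq> {}" unfolding move_slope_def by simp
  moreover have "top_run_start ?E + Min ?E \<le> Max ?E + 1"
    using top_E run unfolding Max_E Min_E \<sigma>_def by linarith
  moreover have "Max ?E + 1 \<noteq> 2 * Min ?E" using run np unfolding Max_E Min_E \<sigma>_def by linarith
  ultimately have "franklin ?E = move_smallest ?E" by (cases ?E rule: franklin_cases) auto
  also have "\<dots> = insert M (?E - {\<sigma>, b - 1})"
  proof -
    have "Max ?E + 1 = M" "Max ?E + 1 - Min ?E = b - 1"
      using run unfolding Max_E Min_E \<sigma>_def by linarith+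
    then show ?thesis unfolding move_smallest_def Min_E by simp
  qed
  also have "\<dots> = D"
  proof -
    have "M \<in> D" unfolding M_def using assms(1,3) by simp
    moreover have "\<sigma> \<notin> D"
    proof
      assume "\<sigma> \<in> D"
      then have "Min D \<le> \<sigma>" using assms(1) by simp
      then show False using long run(1) unfolding \<sigma>_def by linarith
    qed
    ultimately show ?thesis
      unfolding move_slope_def b_def[symmetric] M_def[symmetric] \<sigma>_def[symmetric]
      using run(3) by blast
  qed
  finally show ?thesis .
qed

lemma franklin_franklin:
  assumes "finite D" "0 \<notin> D"
  shows "franklin (franklin D) = D"
  using assms by (cases D rule: franklin_cases) (simp_all add: franklin_move_smallest franklin_move_slope)

lemma sum_franklin:
  assumes "finite D" "0 \<notin> D"
  shows "\<Sum>(franklin D) = \<Sum>D"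
  using assms by (cases D rule: franklin_cases) (simp_all add: sum_move_smallest sum_move_slope)

lemma finite_franklin: "finite D \<Longrightarrow> finite (franklin D)"
  by (cases D rule: franklin_cases) (simp_all add: move_smallest_def move_slope_def)

lemma zero_notin_franklin:
  assumes "finite D" "0 \<notin> D"
  shows "0 \<notin> franklin D"
proof (cases D rule: franklin_cases)
  case smallest
  then show ?thesis using Min_less_move_smallest[OF assms smallest(1-3)] by blast
next
  case slope
  then have "0 < Min (franklin D)"
    using Min_move_slope[OF assms slope(1-3)] top_run_start_le_Max[OF assms(1) slope(1)] by simp
  then show ?thesis using finite_franklin[OF assms(1)] by (metis Min_le not_le)
qed (use assms in simp_all)

lemma franklin_subset_atLeastAtMost_sum:
  assumes "finite D" "0 \<notin> D"
  shows "franklin D \<subseteq> {1..\<Sum>D}"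
proof
  fix x assume x: "x \<in> franklin D"
  then have "x \<le> \<Sum>(franklin D)" using finite_franklin[OF assms(1)] by (intro member_le_sum) simp_all
  moreover have "x \<noteq> 0" using x zero_notin_franklin[OF assms] by (metis gr0I)
  ultimately show "x \<in> {1..\<Sum>D}" using sum_franklin[OF assms] by simp
qed

lemma atLeastAtMost_if_top_run_start_eq_Min:
  assumes "finite D" "D \<noteq> {}" "top_run_start D = Min D"
  shows "D = {Min D..Max D}"
  using top_run_start_run[OF assms(1,2)] assms by auto

lemma franklin_fixed_point_interval:
  assumes "finite D" "0 \<notin> D" "franklin D = D"
  obtains k where "D = {k..<2 * k} \<or> D = {k + 1..<2 * k + 1}"
proof (cases D rule: franklin_cases)
  case empty
  then show ?thesis using that[of 0] by simp
next
  case pentagonal_smallest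
  then have "top_run_start D = Min D" using Min_le_top_run_start[OF assms(1)] by fastforce
  then have "D = {Min D..<2 * Min D}"
    using atLeastAtMost_if_top_run_start_eq_Min[OF assms(1) pentagonal_smallest(1)]
      pentagonal_smallest(3) by (simp add: atLeastLessThanSuc_atLeastAtMost[symmetric])
  then show ?thesis using that by blast
next
  case smallest
  then show ?thesis using assms Max_move_smallest[OF assms(1,2) smallest(1-3)] by simp
next
  case pentagonal_slope
  then have b: "top_run_start D = Min D" using Min_le_top_run_start[OF assms(1)] by fastforce
  then have "0 < Min D" using top_run_start_pos[OF assms(1) pentagonal_slope(1) assms(2)] by simp
  moreover have "Max D = 2 * (Min D - 1)" using pentagonal_slope(3) b by linarith
  ultimately have "D = {(Min D - 1) + 1..<2 * (Min D - 1) + 1}"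
    using atLeastAtMost_if_top_run_start_eq_Min[OF assms(1) pentagonal_slope(1) b]
    by (simp add: atLeastLessThanSuc_atLeastAtMost[symmetric])
  then show ?thesis using that by blast
next
  case slope
  have "0 < Max D" using assms(1,2) slope(1) Max_in by (metis gr0I)
  then show ?thesis using assms Max_move_slope[OF assms(1,2) slope(1-3)] slope(4) by simp
qed

lemma double_sum_atLeastLessThan: "2 * \<Sum>{c..<c + l} + l = l * (2 * c + l)" for c l :: nat
  by (induction l) (simp_all add: algebra_simps)

lemma pentagonal_sum_square:
  fixes k :: nat
  shows "24 * int (\<Sum>{k..<2 * k}) + 1 = (6 * int k - 1)\<^sup>2"
    and "24 * int (\<Sum>{k + 1..<2 * k + 1}) + 1 = (6 * int k + 1)\<^sup>2"
proof -
  define S where "S = \<Sum>{k..<2 * k}"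
  have "2 * S + k = k * (3 * k)"
    using double_sum_atLeastLessThan[of k k] unfolding S_def by (simp add: mult_2)
  then have "int (2 * S + k) = int (k * (3 * k))" by (rule arg_cong)
  then have "2 * int S + int k = 3 * (int k * int k)" by simp
  moreover have "(6 * int k - 1)\<^sup>2 = 36 * (int k * int k) - 12 * int k + 1"
    by (simp add: power2_eq_square algebra_simps)
  ultimately show "24 * int S + 1 = (6 * int k - 1)\<^sup>2" by linarith
next
  define S where "S = \<Sum>{k + 1..<2 * k + 1}"
  have "k + 1 + k = 2 * k + 1" by simp
  then have "2 * S + k = k * (2 * (k + 1) + k)"
    using double_sum_atLeastLessThan[of "k + 1" k] unfolding S_def by (simp only:)
  then have "int (2 * S + k) = int (k * (2 * (k + 1) + k))" by (rule arg_cong)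
  then have "2 * int S + int k = 3 * (int k * int k) + 2 * int k" by (simp add: algebra_simps)
  moreover have "(6 * int k + 1)\<^sup>2 = 36 * (int k * int k) + 12 * int k + 1"
    by (simp add: power2_eq_square algebra_simps)
  ultimately show "24 * int S + 1 = (6 * int k + 1)\<^sup>2" by linarith
qed

lemma franklin_fixed_point_square:
  assumes "finite D" "0 \<notin> D" "franklin D = D"
  obtains y :: int where "24 * int (\<Sum>D) + 1 = y\<^sup>2"
  using franklin_fixed_point_interval[OF assms] pentagonal_sum_square by metis

section \<open>Multiplicities of the form \<open>j(pr+a) + pk\<close>\<close>

lemma allowed_mult_cases:
  assumes "\<not> p dvd p * r + a" "x \<in> allowed_mult p r a m"
  obtains (multiple) k where "k < m" "p dvd x" "x = p * k"
  | (shifted) k where "k < m" "\<not> p dvd x" "x = p * r + a + p * k"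
proof -
  obtain j k where j: "j \<in> {0, 1}" and "k < m" "x = j * (p * r + a) + p * k"
    using assms(2) unfolding allowed_mult_def by blast
  moreover have "p dvd (p * r + a) + p * k \<longleftrightarrow> p dvd p * r + a" by (simp add: dvd_add_left_iff)
  ultimately show ?thesis using j assms(1) that by auto
qed

lemma allowed_mult_intros:
  assumes "k < m"
  shows "p * k \<in> allowed_mult p r a m" and "p * r + a + p * k \<in> allowed_mult p r a m"
proof -
  have "0 * (p * r + a) + p * k \<in> allowed_mult p r a m" "1 * (p * r + a) + p * k \<in> allowed_mult p r a m"
    unfolding allowed_mult_def using assms by blast+
  then show "p * k \<in> allowed_mult p r a m" "p * r + a + p * k \<in> allowed_mult p r a m" by simp_all
qed

lemma partitions_mult_outside:
  assumes "f \<in> partitions_mult n" "i \<notin> {1..n}"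
  shows "f i = 0"
  using assms unfolding partitions_mult_def by (cases i) auto

lemma sum_weighted_indicator:
  fixes A p n :: nat and k :: "nat \<Rightarrow> nat"
  assumes "D \<subseteq> {1..n}"
  shows "(\<Sum>i=1..n. i * ((if i \<in> D then A else 0) + p * k i))
    = A * \<Sum>D + p * (\<Sum>i=1..n. i * k i)"
proof -
  have "(\<Sum>i=1..n. i * ((if i \<in> D then A else 0) + p * k i))
      = (\<Sum>i=1..n. (if i \<in> D then A * i else 0) + p * (i * k i))"
    by (rule sum.cong) (simp_all add: algebra_simps)
  also have "\<dots> = (\<Sum>i=1..n. if i \<in> D then A * i else 0) + p * (\<Sum>i=1..n. i * k i)"
    by (simp add: sum.distrib sum_distrib_left)
  also have "(\<Sum>i=1..n. if i \<in> D then A * i else 0) = (\<Sum>i\<in>D. A * i)"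
    using sum.inter_restrict[of "{1..n}" "\<lambda>i. A * i" D] assms by (simp add: Int_absorb1)
  finally show ?thesis by (simp add: sum_distrib_left)
qed

locale admissible_partitions =
  fixes p r a m n :: nat
  assumes not_dvd: "\<not> p dvd p * r + a" and m_pos: "0 < m"
begin

definition admissible :: "(nat \<Rightarrow> nat) set" where
  "admissible = {f \<in> partitions_mult n. \<forall>i \<in> {1..n}. 0 < f i \<longrightarrow> f i \<in> allowed_mult p r a m}"

lemma card_admissible: "card admissible = b2 p r a m n"
  unfolding admissible_def b2_def ..

text \<open>Since \<open>p\<close> does not divide \<open>pr + a\<close>, the parts of \<open>marked f\<close> are exactly those whose
  multiplicity has \<open>j = 1\<close> in \<open>j(pr+a) + pk\<close>.\<close>

definition marked :: "(nat \<Rightarrow> nat) \<Rightarrow> nat set" where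
  "marked f = {i \<in> {1..n}. \<not> p dvd f i}"

definition franklin_mult :: "(nat \<Rightarrow> nat) \<Rightarrow> nat \<Rightarrow> nat" where
  "franklin_mult f i = f i - (if i \<in> marked f then p * r + a else 0)
     + (if i \<in> franklin (marked f) then p * r + a else 0)"

lemma marked_subset: "marked f \<subseteq> {1..n}"
  unfolding marked_def by blast

lemma finite_marked: "finite (marked f)"
  using marked_subset by (rule finite_subset) simp

lemma zero_notin_marked: "0 \<notin> marked f"
  using marked_subset by fastforce

lemma admissible_mult:
  assumes "f \<in> admissible"
  obtains k where "k < m" "f i = (if i \<in> marked f then p * r + a else 0) + p * k"
proof (cases "i \<in> {1..n} \<and> 0 < f i")
  case True
  then have "f i \<in> allowed_mult p r a m" using assms unfolding admissible_def by blast
  with not_dvd show ?thesis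
  proof (cases rule: allowed_mult_cases)
    case (multiple k)
    then have "i \<notin> marked f" unfolding marked_def by blast
    then show ?thesis using that multiple by simp
  next
    case (shifted k)
    then have "i \<in> marked f" using True unfolding marked_def by blast
    then show ?thesis using that shifted by simp
  qed
next
  case False
  then have "f i = 0" using partitions_mult_outside[of f n i] assms unfolding admissible_def by auto
  then show ?thesis using that[of 0] m_pos unfolding marked_def by simp
qed

lemma admissible_decomp:
  assumes "f \<in> admissible"
  obtains k where "\<And>i. k i < m" "\<And>i. f i = (if i \<in> marked f then p * r + a else 0) + p * k i"
    and "n = (p * r + a) * \<Sum>(marked f) + p * (\<Sum>i=1..n. i * k i)"
proof -
  let ?P = "\<lambda>i k. k < m \<and> f i = (if i \<in> marked f then p * r + a else 0) + p * k"
  have "\<exists>k. ?P i k" for i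
    by (rule admissible_mult[OF assms, of i]) blast
  then obtain k where "\<forall>i. ?P i (k i)"
    using choice[of ?P] by blast
  then have k: "\<And>i. k i < m" "\<And>i. f i = (if i \<in> marked f then p * r + a else 0) + p * k i"
    by blast+
  have "n = (\<Sum>i=1..n. i * f i)" using assms unfolding admissible_def partitions_mult_def by simp
  also have "\<dots> = (\<Sum>i=1..n. i * ((if i \<in> marked f then p * r + a else 0) + p * k i))"
    by (rule sum.cong[OF refl]) (subst k(2), rule refl)
  also have "\<dots> = (p * r + a) * \<Sum>(marked f) + p * (\<Sum>i=1..n. i * k i)"
    by (rule sum_weighted_indicator[OF marked_subset])
  finally show ?thesis using that k by blast
qed

lemma franklin_marked_subset:
  assumes "f \<in> admissible"
  shows "franklin (marked f) \<subseteq> {1..n}"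
proof -
  obtain k where "n = (p * r + a) * \<Sum>(marked f) + p * (\<Sum>i=1..n. i * k i)"
    using admissible_decomp[OF assms] by blast
  moreover have "1 \<le> p * r + a" using not_dvd by (metis dvd_0_right less_one not_le)
  then have "1 * \<Sum>(marked f) \<le> (p * r + a) * \<Sum>(marked f)" by (rule mult_le_mono1)
  ultimately have "\<Sum>(marked f) \<le> n" by linarith
  then have "{1..\<Sum>(marked f)} \<subseteq> {1..n}" by simp
  with franklin_subset_atLeastAtMost_sum[OF finite_marked[of f] zero_notin_marked[of f]] show ?thesis
    by (rule subset_trans)
qed

lemma franklin_mult_eq:
  assumes "f i = (if i \<in> marked f then p * r + a else 0) + p * k"
  shows "franklin_mult f i = (if i \<in> franklin (marked f) then p * r + a else 0) + p * k"
  unfolding franklin_mult_def by (metis assms diff_add_inverse add.commute)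

lemma marked_franklin_mult:
  assumes "f \<in> admissible"
  shows "marked (franklin_mult f) = franklin (marked f)"
proof -
  have "\<not> p dvd franklin_mult f i \<longleftrightarrow> i \<in> franklin (marked f)" for i
  proof -
    obtain k where "f i = (if i \<in> marked f then p * r + a else 0) + p * k"
      by (rule admissible_mult[OF assms])
    then have "franklin_mult f i = (if i \<in> franklin (marked f) then p * r + a else 0) + p * k"
      by (rule franklin_mult_eq)
    moreover have "p dvd (p * r + a) + p * k \<longleftrightarrow> p dvd p * r + a" by (simp add: dvd_add_left_iff)
    ultimately show ?thesis using not_dvd by simp
  qed
  then show ?thesis using franklin_marked_subset[OF assms] unfolding marked_def by blast
qed

lemma franklin_mult_admissible:
  assumes "f \<in> admissible"
  shows "franklin_mult f \<in> admissible"
proof -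
  let ?F = "franklin (marked f)"
  obtain k where k: "\<And>i. k i < m" "\<And>i. f i = (if i \<in> marked f then p * r + a else 0) + p * k i"
    and size: "n = (p * r + a) * \<Sum>(marked f) + p * (\<Sum>i=1..n. i * k i)"
    using admissible_decomp[OF assms] by blast
  have g: "franklin_mult f i = (if i \<in> ?F then p * r + a else 0) + p * k i" for i
    using k(2) by (rule franklin_mult_eq)
  have outside: "franklin_mult f i = 0" if "i \<notin> {1..n}" for i
  proof -
    have "f i = 0" using assms that partitions_mult_outside unfolding admissible_def by blast
    moreover have "i \<notin> marked f" "i \<notin> ?F"
      using that marked_subset franklin_marked_subset[OF assms] by blast+
    ultimately show ?thesis unfolding franklin_mult_def by simp
  qed
  have "(\<Sum>i=1..n. i * franklin_mult f i)
      = (\<Sum>i=1..n. i * ((if i \<in> ?F then p * r + a else 0) + p * k i))"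
    by (rule sum.cong[OF refl]) (subst g, rule refl)
  also have "\<dots> = n"
    using sum_weighted_indicator[OF franklin_marked_subset[OF assms]] size
      sum_franklin[OF finite_marked zero_notin_marked] by simp
  finally have "(\<Sum>i=1..n. i * franklin_mult f i) = n" .
  moreover have "franklin_mult f i \<in> allowed_mult p r a m" if "0 < franklin_mult f i" for i
    using allowed_mult_intros[OF k(1)[of i]] g[of i] by (cases "i \<in> ?F") simp_all
  ultimately show ?thesis using outside unfolding admissible_def partitions_mult_def by auto
qed

lemma franklin_mult_involutive:
  assumes "f \<in> admissible"
  shows "franklin_mult (franklin_mult f) = f"
proof
  fix i
  obtain k where k: "f i = (if i \<in> marked f then p * r + a else 0) + p * k"
    by (rule admissible_mult[OF assms])
  have "franklin (marked (franklin_mult f)) = marked f"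
    using marked_franklin_mult[OF assms] franklin_franklin[OF finite_marked zero_notin_marked] by simp
  moreover have "franklin_mult f i = (if i \<in> marked (franklin_mult f) then p * r + a else 0) + p * k"
    using franklin_mult_eq[OF k] marked_franklin_mult[OF assms] by simp
  ultimately show "franklin_mult (franklin_mult f) i = f i"
    using franklin_mult_eq k by metis
qed

lemma odd_b2_obtains_pentagonal_residue:
  assumes "odd (b2 p r a m n)"
  obtains s and y :: int where "[n = (p * r + a) * s] (mod p)" "24 * int s + 1 = y\<^sup>2"
proof -
  have "\<not> (\<forall>f \<in> admissible. franklin_mult f \<noteq> f)"
    using even_card_fixpoint_free_involution[of admissible franklin_mult] franklin_mult_admissible
      franklin_mult_involutive assms card_admissible by auto
  then obtain f where f: "f \<in> admissible" "franklin_mult f = f" by blast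
  then have "franklin (marked f) = marked f" using marked_franklin_mult by metis
  then obtain y :: int where "24 * int (\<Sum>(marked f)) + 1 = y\<^sup>2"
    using franklin_fixed_point_square[OF finite_marked zero_notin_marked] by metis
  moreover obtain c where "n = (p * r + a) * \<Sum>(marked f) + p * c"
    using admissible_decomp[OF f(1)] by blast
  then have "[n = (p * r + a) * \<Sum>(marked f)] (mod p)" unfolding cong_def by (metis mod_mult_self2)
  ultimately show ?thesis using that by blast
qed

end

lemma prime_not_dvd_mult_add:
  fixes p a r :: nat
  assumes "prime p" "coprime a p"
  shows "\<not> p dvd p * r + a"
proof
  assume "p dvd p * r + a"
  then have "p dvd a" by (simp add: dvd_add_right_iff)
  then show False using assms by (meson coprime_common_divisor dvd_refl not_prime_unit)
qed

lemma QuadRes_pentagonal_residue: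
  fixes p t ainv y :: int and a s :: nat
  assumes "[int a * ainv = 1] (mod p)" "[t = int a * int s] (mod p)" "24 * int s + 1 = y\<^sup>2"
  shows "QuadRes p (24 * t * ainv + 1)"
proof -
  have "[24 * t * ainv + 1 = 24 * (int a * int s) * ainv + 1] (mod p)"
    using assms(2) by (intro cong_add cong_mult cong_refl)
  also have "24 * (int a * int s) * ainv + 1 = 24 * int s * (int a * ainv) + 1"
    by (simp add: algebra_simps)
  also have "[\<dots> = 24 * int s * 1 + 1] (mod p)"
    using assms(1) by (intro cong_add cong_mult cong_refl)
  also have "24 * int s * 1 + 1 = y\<^sup>2" using assms(3) by simp
  finally show ?thesis unfolding QuadRes_def using cong_sym by blast
qed

theorem theorem4p2:
  fixes p a r m :: nat and t ainv :: int
  assumes "prime p" and "p > 3"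
    and "a > 0" and "coprime a p"
    and "m \<ge> 1"
    and "[int a * ainv = 1] (mod int p)"
    and "\<not> QuadRes (int p) (24 * t * ainv + 1)"
  shows "\<forall>n::nat. int p * int n + t \<ge> 0 \<longrightarrow> even (b2 p r a m (nat (int p * int n + t)))"
proof (intro allI impI)
  fix n' :: nat
  assume nonneg: "int p * int n' + t \<ge> 0"
  define n where "n = nat (int p * int n' + t)"
  interpret admissible_partitions p r a m n
    using prime_not_dvd_mult_add[OF assms(1,4)] assms(5) by unfold_locales simp_all
  show "even (b2 p r a m n)"
  proof (rule ccontr)
    assume "odd (b2 p r a m n)"
    then obtain s and y :: int
      where res: "[n = (p * r + a) * s] (mod p)" and sq: "24 * int s + 1 = y\<^sup>2"
      by (rule odd_b2_obtains_pentagonal_residue)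
    have "[t = int p * int n' + t] (mod int p)" by (simp add: cong_def)
    also have "[int p * int n' + t = (int p * int r + int a) * int s] (mod int p)"
      using res nonneg unfolding n_def by (simp flip: cong_int_iff)
    also have "[(int p * int r + int a) * int s = int a * int s] (mod int p)"
      by (simp add: cong_def algebra_simps)
    finally show False using QuadRes_pentagonal_residue[OF assms(6) _ sq] assms(7) by blast
  qed
qed

end
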